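(* For all $p\in\mathbb N=\{0,1,2,\dots\}$, $\zeta\in\{0,1\}$ and $0\le k\le n$, $$E_{n,k}(-1,2;\,2-\zeta+2p,\ \zeta-2p)=n!\binom{n+1}{2k+2p+1-\zeta}-(-1)^{k+p}\sum_{\ell=0}^{p-1}(-1)^\ell(2-\zeta+2\ell)^{\overline n}\binom{n+1}{k+p-\ell}.$$
   Context: Generalized Eulerian numbers $E_{n,k}(a,b;c_0,c_\infty)$: defined by $E_{0,0}=1$, $E_{n,k}=0$ if $n<0$, $k<0$ or $k>n$, and $E_{n+1,k+1}=[-an+b(k+1)+c_0]E_{n,k+1}+[(a+b)n-bk+c_\infty]E_{n,k}$ for $n\ge0$, $k\in\mathbb Z$. $x^{\overline n}=x(x+1)\cdots(x+n-1)$; $\binom{m}{j}=0$ if $j<0$ or $j>m$. *)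

theory Defs
  imports Complex_Main
begin

text \<open>Generalized Eulerian numbers E_{n,k}(a,b;c0,cinf), with k ranging over the integers;
  E_{n,k} = 0 for k < 0 or k > n.  The recurrence
  E_{n+1,k+1} = [-a n + b(k+1) + c0] E_{n,k+1} + [(a+b) n - b k + cinf] E_{n,k}
  is written with k' = k+1.\<close>
fun genEuler :: "int \<Rightarrow> int \<Rightarrow> int \<Rightarrow> int \<Rightarrow> nat \<Rightarrow> int \<Rightarrow> int" where
  "genEuler a b c0 ci 0 k = (if k = 0 then 1 else 0)"
| "genEuler a b c0 ci (Suc n) k =
     (if k < 0 \<or> k > int (Suc n) then 0
      else (- a * int n + b * k + c0) * genEuler a b c0 ci n k
         + ((a + b) * int n - b * (k - 1) + ci) * genEuler a b c0 ci n (k - 1))"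

definition binomz :: "nat \<Rightarrow> int \<Rightarrow> int" where
  "binomz m j = (if j < 0 then 0 else int (m choose nat j))"

end

theory Submission imports Defs begin

text \<open>For fixed \<open>c\<close> the numbers \<open>E(n,k) = E\<^sub>n\<^sub>,\<^sub>k(-1,2;c,2-c)\<close> obey a recurrence in \<open>n\<close> that is
  linear in the array, so an array is determined by its row \<open>n = 0\<close>.  With \<open>c = 2 - \<zeta> + 2p\<close>
  every summand of the right-hand side obeys the same recurrence: \<open>n! C(n+1, 2k+m)\<close> does for
  \<open>c = m + 1\<close>, and \<open>(-1)\<^sup>k x\<^sup>(\<^sup>n\<^sup>) C(n+1, k+s)\<close> (rising factorial) for \<open>c = x + 2s\<close>; both come
  down to Pascal's rule plus the absorption identity \<open>j C(m,j) = (m-j+1) C(m,j-1)\<close>.  At \<open>n = 0\<close>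
  the alternating sum telescopes (induction on \<open>p\<close>) and the right-hand side is \<open>\<delta>\<^sub>k\<^sub>0\<close>.\<close>

lemma binomz_nat: "binomz m (int t) = int (m choose t)"
  by (simp add: binomz_def)

lemma binomz_Suc: "binomz (Suc m) j = binomz m j + binomz m (j - 1)"
proof (cases "j \<le> 0")
  case True
  then show ?thesis by (simp add: binomz_def)
next
  case False
  then obtain t where j: "j = int (Suc t)"
    by (metis gr0_implies_Suc not_le of_nat_0_less_iff zero_less_imp_eq_int)
  show ?thesis unfolding j binomz_nat by (simp add: binomz_nat)
qed

lemma binomz_absorption: "j * binomz m j = (int m - j + 1) * binomz m (j - 1)"
proof (cases "j \<le> 0")
  case True
  then show ?thesis by (cases "j = 0") (simp_all add: binomz_def)
next
  case False
  then obtain t where j: "j = int (Suc t)"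
    by (metis gr0_implies_Suc not_le of_nat_0_less_iff zero_less_imp_eq_int)
  have nat_form: "Suc t * (m choose Suc t) = (m - t) * (m choose t)"
    using binomial_absorption[of t m] binomial_absorb_comp[of m t] by simp
  show ?thesis
  proof (cases "t \<le> m")
    case True
    then show ?thesis
      using arg_cong[OF nat_form, of int] unfolding j binomz_nat
      by (simp add: binomz_nat of_nat_diff algebra_simps)
  qed (simp add: j binomz_def binomial_eq_0)
qed

definition parity_sign :: "int \<Rightarrow> int" where
  "parity_sign k = (if even k then 1 else -1)"

lemma parity_sign_diff1: "parity_sign (k - 1) = - parity_sign k"
  by (simp add: parity_sign_def)

lemma parity_sign_add1: "parity_sign (k + 1) = - parity_sign k"
  by (simp add: parity_sign_def)

lemma parity_sign_add_even: "parity_sign (k + 2 * x) = parity_sign k"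
  by (simp add: parity_sign_def)

lemma parity_sign_of_nat: "parity_sign (int m) = (-1) ^ m"
  by (simp add: parity_sign_def)

definition eulerian_rec :: "int \<Rightarrow> (nat \<Rightarrow> int \<Rightarrow> int) \<Rightarrow> bool" where
  "eulerian_rec c F \<longleftrightarrow>
     (\<forall>n k. F (Suc n) k = (int n + 2 * k + c) * F n k + (int n - 2 * k + 4 - c) * F n (k - 1))"

lemma eulerian_recD:
  "eulerian_rec c F \<Longrightarrow> F (Suc n) k = (int n + 2 * k + c) * F n k + (int n - 2 * k + 4 - c) * F n (k - 1)"
  by (simp add: eulerian_rec_def)

lemma genEuler_eq_0: "k < 0 \<or> k > int n \<Longrightarrow> genEuler a b c0 ci n k = 0"
  by (cases n) auto

lemma genEuler_Suc:
  "genEuler a b c0 ci (Suc n) k =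
     (- a * int n + b * k + c0) * genEuler a b c0 ci n k
     + ((a + b) * int n - b * (k - 1) + ci) * genEuler a b c0 ci n (k - 1)"
  by (auto simp: genEuler_eq_0)

lemma eulerian_rec_genEuler: "eulerian_rec c (genEuler (-1) 2 c (2 - c))"
  unfolding eulerian_rec_def genEuler_Suc by (simp add: algebra_simps)

lemma eulerian_rec_unique:
  assumes "eulerian_rec c F" and "eulerian_rec c G" and "F 0 = G 0"
  shows "F n k = G n k"
proof (induction n arbitrary: k)
  case 0
  then show ?case using assms(3) by simp
next
  case (Suc n)
  then show ?case using eulerian_recD[OF assms(1)] eulerian_recD[OF assms(2)] by simp
qed

lemma eulerian_rec_diff:
  assumes "eulerian_rec c F" and "eulerian_rec c G"
  shows "eulerian_rec c (\<lambda>n k. F n k - G n k)"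
  unfolding eulerian_rec_def
  by (simp only: eulerian_recD[OF assms(1)] eulerian_recD[OF assms(2)]) (simp add: algebra_simps)

lemma eulerian_rec_sum:
  "(\<And>l. l \<in> L \<Longrightarrow> eulerian_rec c (F l)) \<Longrightarrow> eulerian_rec c (\<lambda>n k. \<Sum>l\<in>L. F l n k)"
  by (simp add: eulerian_rec_def sum.distrib sum_distrib_left)

lemma eulerian_rec_fact_binomz:
  "eulerian_rec (m + 1) (\<lambda>n k. fact n * binomz (n + 1) (2 * k + m))"
  unfolding eulerian_rec_def
proof (intro allI)
  fix n :: nat and k :: int
  let ?B = "binomz (n + 1)" and ?j = "2 * k + m"
  have binomz_step: "(int n + 1) * binomz (n + 2) ?j = (int n + ?j + 1) * ?B ?j + (int n + 3 - ?j) * ?B (?j - 2)"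
    using binomz_absorption[of ?j "n + 1"] binomz_absorption[of "?j - 1" "n + 1"]
    by (simp add: binomz_Suc algebra_simps)
  have "fact (Suc n) * binomz (Suc n + 1) ?j = fact n * ((int n + 1) * binomz (n + 2) ?j)"
    by (simp add: algebra_simps)
  also have "\<dots> = fact n * ((int n + ?j + 1) * ?B ?j + (int n + 3 - ?j) * ?B (?j - 2))"
    by (simp only: binomz_step)
  finally show "fact (Suc n) * binomz (Suc n + 1) ?j =
      (int n + 2 * k + (m + 1)) * (fact n * ?B ?j)
      + (int n - 2 * k + 4 - (m + 1)) * (fact n * ?B (2 * (k - 1) + m))"
    by (simp add: algebra_simps)
qed

lemma eulerian_rec_pochhammer_binomz:
  "eulerian_rec (c + 2 * s)
     (\<lambda>n k. parity_sign (k + d) * pochhammer c n * binomz (n + 1) (k + s))"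
  unfolding eulerian_rec_def
proof (intro allI)
  fix n :: nat and k :: int
  let ?B = "binomz (n + 1)" and ?j = "k + s" and ?\<sigma> = "parity_sign (k + d)"
  have binomz_step: "(c + int n) * binomz (n + 2) ?j = (int n + 2 * ?j + c) * ?B ?j - (int n - 2 * ?j + 4 - c) * ?B (?j - 1)"
    using binomz_absorption[of ?j "n + 1"] by (simp add: binomz_Suc algebra_simps)
  have sign: "parity_sign (k - 1 + d) = - ?\<sigma>"
    using parity_sign_diff1[of "k + d"] by (simp add: algebra_simps)
  have "?\<sigma> * pochhammer c (Suc n) * binomz (Suc n + 1) ?j
      = ?\<sigma> * pochhammer c n * ((c + int n) * binomz (n + 2) ?j)"
    by (simp add: pochhammer_rec' algebra_simps)
  also have "\<dots> = ?\<sigma> * pochhammer c n * ((int n + 2 * ?j + c) * ?B ?j - (int n - 2 * ?j + 4 - c) * ?B (?j - 1))"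
    by (simp only: binomz_step)
  finally show "?\<sigma> * pochhammer c (Suc n) * binomz (Suc n + 1) ?j =
      (int n + 2 * k + (c + 2 * s)) * (?\<sigma> * pochhammer c n * ?B ?j)
      + (int n - 2 * k + 4 - (c + 2 * s)) * (parity_sign (k - 1 + d) * pochhammer c n * ?B (k - 1 + s))"
    unfolding sign by (simp add: algebra_simps)
qed

definition eulerian_closed_form :: "int \<Rightarrow> nat \<Rightarrow> nat \<Rightarrow> int \<Rightarrow> int" where
  "eulerian_closed_form z p n k = fact n * binomz (n + 1) (2 * k + 2 * int p + 1 - z)
     - (\<Sum>l<p. parity_sign (k + int p + int l) * pochhammer (2 - z + 2 * int l) n
                * binomz (n + 1) (k + int p - int l))"

lemma eulerian_rec_closed_form: "eulerian_rec (2 - z + 2 * int p) (eulerian_closed_form z p)"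
proof -
  have "eulerian_rec (2 - z + 2 * int p) (\<lambda>n k. fact n * binomz (n + 1) (2 * k + (2 * int p + 1 - z)))"
    using eulerian_rec_fact_binomz[of "2 * int p + 1 - z"] by (simp add: algebra_simps)
  moreover have "eulerian_rec (2 - z + 2 * int p) (\<lambda>n k. parity_sign (k + (int p + int l))
      * pochhammer (2 - z + 2 * int l) n * binomz (n + 1) (k + (int p - int l)))" for l
    using eulerian_rec_pochhammer_binomz[of "2 - z + 2 * int l" "int p - int l" "int p + int l"]
    by (simp add: algebra_simps)
  ultimately show ?thesis
    unfolding eulerian_closed_form_def
    by (intro eulerian_rec_diff eulerian_rec_sum) (simp_all add: add.assoc add_diff_eq)
qed

lemma binomz_0: "binomz 0 j = (if j = 0 then 1 else 0)"
  by (simp add: binomz_def)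

lemma binomz_1: "binomz (Suc 0) j = (if j = 0 \<or> j = 1 then 1 else 0)"
  by (simp add: binomz_Suc binomz_0)

lemma eulerian_closed_form_0:
  assumes "z \<in> {0, 1}"
  shows "eulerian_closed_form z p 0 k = (if k = 0 then 1 else 0)"
proof (induction p arbitrary: k)
  case 0
  then show ?case using assms by (auto simp: eulerian_closed_form_def binomz_1)
next
  case (Suc p)
  have last_sign: "parity_sign (k + int (Suc p) + int p) = - parity_sign k"
    using parity_sign_add_even[of "k + 1" "int p"] parity_sign_add1[of k]
    by (simp add: algebra_simps)
  have "eulerian_closed_form z (Suc p) 0 k
      = eulerian_closed_form z p 0 (k + 1) + parity_sign k * binomz 1 (k + 1)"
    unfolding eulerian_closed_form_def sum.lessThan_Suc
    using last_sign by (simp add: algebra_simps)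
  also have "\<dots> = (if k = 0 then 1 else 0)"
    using Suc.IH[of "k + 1"] by (cases "k = -1") (auto simp: binomz_1 parity_sign_def)
  finally show ?case .
qed

lemma genEuler_eq_closed_form:
  assumes "z \<in> {0, 1}"
  shows "genEuler (-1) 2 (2 - z + 2 * int p) (z - 2 * int p) n k = eulerian_closed_form z p n k"
proof -
  have "eulerian_rec (2 - z + 2 * int p) (genEuler (-1) 2 (2 - z + 2 * int p) (z - 2 * int p))"
    using eulerian_rec_genEuler[of "2 - z + 2 * int p"] by simp
  moreover have "genEuler (-1) 2 (2 - z + 2 * int p) (z - 2 * int p) 0 = eulerian_closed_form z p 0"
    using eulerian_closed_form_0[OF assms] by auto
  ultimately show ?thesis
    using eulerian_rec_unique eulerian_rec_closed_form by blast
qed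

text \<open>The identity holds for every integer \<open>k\<close>.\<close>

theorem mainTheorem17:
  fixes p n k :: nat and \<zeta> :: int
  assumes "\<zeta> \<in> {0, 1}" and "k \<le> n"
  shows "genEuler (-1) 2 (2 - \<zeta> + 2 * int p) (\<zeta> - 2 * int p) n (int k) =
    fact n * binomz (n + 1) (2 * int k + 2 * int p + 1 - \<zeta>)
    - (-1) ^ (k + p) * (\<Sum>l<p. (-1) ^ l * pochhammer (2 - \<zeta> + 2 * int l) n
                                   * binomz (n + 1) (int k + int p - int l))"
proof -
  have "parity_sign (int k + int p + int l) = (-1) ^ (k + p) * (-1) ^ l" for l
    using parity_sign_of_nat[of "k + p + l"] by (simp add: power_add)
  then show ?thesis
    unfolding genEuler_eq_closed_form[OF assms(1)] eulerian_closed_form_def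
    by (simp add: sum_distrib_left algebra_simps)
qed

end
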